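(* For the DSF process on $K_{N+1}$ started with $m_0=m_0(N)$ empty vertices, where $m_0(N)\to\infty$ as $N\to\infty$, the scaled halting time $T_N/N$ converges in distribution to a random variable $\tau$ with Laplace transform $$\mathbb{E}[e^{-\sigma\tau}]=\prod_{m\ge1}\Big[1+\frac{\sigma}{m^2}\Big]^{-1}=\frac{\pi\sqrt{\sigma}}{\sinh(\pi\sqrt{\sigma})},\qquad \sigma\ge 0,$$ and probability density on $(0,\infty)$ $$\mathcal{P}(\tau)=\sum_{k=-\infty}^{\infty}(-1)^{k+1}k^2e^{-k^2\tau}.$$
   Context: Dynamic space filling (DSF) on the complete graph $K_{N+1}$ (vertex set of size $N+1$, every two distinct vertices adjacent): there are $N+1$ particles distributed among the $N+1$ vertices. The particles at a vertex form a pile ordered by arrival time; a particle arriving at a vertex is placed on top of the pile. The bottom particle of each nonempty pile never moves. Every other particle independently jumps, at total rate $1$, to one of the $N$ other vertices chosen uniformly at random (rate $1/N$ to each). A vertex is empty if it holds no particle. The halting time $T_N$ is the first time at which every vertex holds exactly one particle. *)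

theory Defs
  imports "HOL-Probability.Probability"
begin

text \<open>A configuration maps each vertex
  to its pile, a list of particles with the head being the TOP of the pile
  (most recent arrival) and the last element the BOTTOM particle.\<close>

type_synonym config = "nat \<Rightarrow> nat list"

definition valid_config :: "nat \<Rightarrow> config \<Rightarrow> bool" where
  "valid_config N c \<longleftrightarrow>
     (\<forall>v. N < v \<longrightarrow> c v = []) \<and>
     (\<forall>v. distinct (c v)) \<and>
     (\<forall>v w. v \<noteq> w \<longrightarrow> set (c v) \<inter> set (c w) = {}) \<and>
     (\<Union>v\<in>{0..N}. set (c v)) = {0..N}"

definition empty_vertices :: "nat \<Rightarrow> config \<Rightarrow> nat set" where
  "empty_vertices N c = {v \<in> {0..N}. c v = []}"

definition halted :: "nat \<Rightarrow> config \<Rightarrow> bool" where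
  "halted N c \<longleftrightarrow> (\<forall>v\<in>{0..N}. length (c v) = 1)"

text \<open>Uniformized jump chain: the continuous-time DSF process is realized by a Poisson
  clock of rate N+1; at each ring a particle p is chosen uniformly among the N+1
  particles and a target vertex w uniformly among the N vertices other than the
  vertex v of p; if p is not the bottom particle of its pile it moves to the top of
  the pile at w, otherwise nothing happens.  Each non-bottom particle thus jumps to
  each other vertex at rate (N+1) * 1/(N+1) * 1/N = 1/N, as required.\<close>

definition dsf_step :: "nat \<Rightarrow> config \<Rightarrow> config pmf" where
  "dsf_step N c =
     do { p \<leftarrow> pmf_of_set {0..N};
          let v = (SOME v. v \<le> N \<and> p \<in> set (c v));
          w \<leftarrow> pmf_of_set ({0..N} - {v});
          return_pmf (if p = last (c v) then c
                      else c(v := remove1 p (c v), w := p # c w)) }"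

fun dsf_paths :: "nat \<Rightarrow> config \<Rightarrow> nat \<Rightarrow> config list pmf" where
  "dsf_paths N c 0 = return_pmf [c]"
| "dsf_paths N c (Suc n) =
     bind_pmf (dsf_paths N c n) (\<lambda>xs. map_pmf (\<lambda>y. xs @ [y]) (dsf_step N (last xs)))"

definition halt_by :: "nat \<Rightarrow> config \<Rightarrow> nat \<Rightarrow> real" where
  "halt_by N c n = measure_pmf.prob (dsf_paths N c n) {xs. \<exists>x\<in>set xs. halted N x}"

text \<open>Distribution function P(T_N \<le> t) of the halting time: T_N \<le> t iff the hitting
  step K of the jump chain is at most the number of clock rings in [0,t], which is
  Poisson((N+1) t) and independent of the chain.\<close>

definition halting_time_cdf :: "nat \<Rightarrow> config \<Rightarrow> real \<Rightarrow> real" where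
  "halting_time_cdf N c t =
     (if t < 0 then 0
      else (\<Sum>n. exp (- (real (N+1) * t)) * (real (N+1) * t) ^ n / fact n * halt_by N c n))"

definition tau_density :: "real \<Rightarrow> real" where
  "tau_density x = (if 0 < x then infsum (\<lambda>k::int. (-1) powi (k+1) * (real_of_int k)^2 * exp (- ((real_of_int k)^2 * x))) UNIV
                    else 0)"

definition tau_law :: "real measure" where
  "tau_law = density lborel (\<lambda>x. ennreal (tau_density x))"

end

theory Submission
  imports Defs
begin

(* Only the number m of empty vertices matters. The N + 1 - m nonempty vertices carry one
   bottom particle each, so exactly m particles can move, and one ring of the clock fills an
   empty vertex with probability m/(N+1) * m/N; otherwise m is unchanged. Solving this pure
   death chain with the partial fraction coefficients c(m,k) of prod_{j<=m} j^2/(j^2+s) and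
   Poissonising the clock gives, for every N,
     P(T_N <= N x) = 1 - sum_{k<=m} c(m,k) exp(-k^2 x),
   i.e. T_N/N is exactly distributed as a sum of independent exponential variables with rates
   1, 4, ..., m^2. Since c(m,k) -> 2 (-1)^(k+1), Tannery's theorem gives convergence of these
   distribution functions to that of tau as m -> oo; Scheffe's lemma carries the Laplace
   transforms prod_{j<=m} (1 + sigma/j^2)^(-1) to the limit, and Euler's product for the sine
   evaluates it. *)

section \<open>Partial fraction coefficients\<close>

(* c(m,k) = prod_{j<=m, j<>k} j^2/(j^2 - k^2), so that
   prod_{j=1..m} j^2/(j^2+s) = sum_{k=1..m} c(m,k) k^2/(k^2+s). *)
definition hypo_coeff :: "nat \<Rightarrow> nat \<Rightarrow> real" where
  "hypo_coeff m k = 2 * (-1)^(k+1) * (fact m)^2 / (fact (m-k) * fact (m+k))"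

lemma hypo_coeff_rec:
  assumes "1 \<le> k" "k < m"
  shows "hypo_coeff m k * (real m^2 - real k^2) = real m^2 * hypo_coeff (m-1) k"
proof -
  obtain n where m: "m = Suc n" and k: "k \<le> n" using assms by (cases m) auto
  have "Suc n - k = Suc (n - k)" using k by simp
  then have A: "(fact (Suc n - k) :: real) = (real n + 1 - real k) * fact (n - k)"
    using k by (simp add: of_nat_diff)
  have B: "(fact (Suc n + k) :: real) = (real n + 1 + real k) * fact (n + k)" by simp
  have pos: "real n + 1 - real k \<noteq> 0" "real n + 1 + real k \<noteq> 0" using k by auto
  have cancel: "X / ((a * B) * (b * C)) * (a * b) = X / (B * C)" if "a \<noteq> 0" "b \<noteq> 0" for X a b B C :: real
    using that by (cases "B * C = 0") (simp_all add: field_simps)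
  have "hypo_coeff m k * (real m^2 - real k^2)
      = 2 * (-1)^(k+1) * (real m * fact n)^2 / (((real n + 1 - real k) * fact (n - k)) * ((real n + 1 + real k) * fact (n + k)))
        * ((real n + 1 - real k) * (real n + 1 + real k))"
    unfolding hypo_coeff_def m by (simp add: A B power2_eq_square algebra_simps)
  also have "\<dots> = real m^2 * hypo_coeff (m-1) k"
    unfolding cancel[OF pos] hypo_coeff_def m by (simp add: power_mult_distrib)
  finally show ?thesis .
qed

lemma hypo_coeff_recurrence:
  assumes "m \<ge> 1"
  shows "(\<Sum>k=1..m. hypo_coeff m k * (real m^2 - real k^2) * h k)
           = real m^2 * (\<Sum>k=1..m-1. hypo_coeff (m-1) k * h k)"
proof -
  have "{1..m} = insert m {1..m-1}" using assms by auto
  then have "(\<Sum>k=1..m. hypo_coeff m k * (real m^2 - real k^2) * h k)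
      = (\<Sum>k=1..m-1. hypo_coeff m k * (real m^2 - real k^2) * h k)"
    using assms by simp
  also have "\<dots> = (\<Sum>k=1..m-1. real m^2 * (hypo_coeff (m-1) k * h k))"
    by (intro sum.cong refl) (use assms in \<open>auto simp: hypo_coeff_rec\<close>)
  finally show ?thesis by (simp add: sum_distrib_left)
qed

lemma hypo_coeff_eq_binomial:
  assumes "k \<le> m"
  shows "hypo_coeff m k = 2 * (-1)^(k+1) * real ((2*m) choose (m-k)) / real ((2*m) choose m)"
proof -
  have "real ((2*m) choose (m-k)) = fact (2*m) / (fact (m-k) * fact (m+k))"
    using assms by (subst binomial_fact) (auto simp: algebra_simps)
  moreover have "real ((2*m) choose m) = fact (2*m) / (fact m * fact m)"
    by (subst binomial_fact) (auto simp: mult_2)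
  ultimately show ?thesis unfolding hypo_coeff_def by (simp add: field_simps power2_eq_square)
qed

lemma alternating_sum_binomial_halves:
  "(\<Sum>i\<le>2*m. (-1::real)^i * real ((2*m) choose i))
     = (-1)^m * (real ((2*m) choose m) + 2 * (\<Sum>k=1..m. (-1)^k * real ((2*m) choose (m-k))))"
proof -
  define b where "b i = (-1::real)^i * real ((2*m) choose i)" for i
  define S where "S = (\<Sum>k=1..m. (-1::real)^k * real ((2*m) choose (m-k)))"
  have sign: "(-1::real)^(m-k) = (-1)^m * (-1)^k" "(-1::real)^(m+k) = (-1)^m * (-1)^k" if "k \<le> m" for k
  proof -
    have "m + k = (m - k) + 2*k" using that by simp
    then have "(-1::real)^(m+k) = (-1)^((m - k) + 2*k)" by (simp only:)
    then show "(-1::real)^(m-k) = (-1)^m * (-1)^k" by (simp add: power_add power_mult)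
    show "(-1::real)^(m+k) = (-1)^m * (-1)^k" by (simp add: power_add)
  qed
  have symmetric: "(2*m) choose (m+k) = (2*m) choose (m-k)" if "k \<le> m" for k
    using that binomial_symmetric[of "m-k" "2*m"] by (simp add: algebra_simps)
  have "(\<Sum>i<m. b i) = (\<Sum>k=1..m. b (m-k))"
    by (rule sum.reindex_bij_witness[where i="\<lambda>k. m - k" and j="\<lambda>i. m - i"]) auto
  also have "\<dots> = (-1)^m * S"
    unfolding S_def sum_distrib_left by (intro sum.cong refl) (simp add: b_def sign)
  finally have lower: "(\<Sum>i<m. b i) = (-1)^m * S" .
  have "(\<Sum>i\<in>{m<..2*m}. b i) = (\<Sum>k=1..m. b (m+k))"
    by (rule sum.reindex_bij_witness[where i="\<lambda>k. m + k" and j="\<lambda>i. i - m"]) auto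
  also have "\<dots> = (-1)^m * S"
    unfolding S_def sum_distrib_left by (intro sum.cong refl) (simp add: b_def sign symmetric)
  finally have upper: "(\<Sum>i\<in>{m<..2*m}. b i) = (-1)^m * S" .
  have "{..2*m} = {..<m} \<union> {m} \<union> {m<..2*m}" by auto
  then have "(\<Sum>i\<le>2*m. b i) = (\<Sum>i<m. b i) + b m + (\<Sum>i\<in>{m<..2*m}. b i)"
    by (simp only:) (subst sum.union_disjoint; auto)+
  moreover have "b m = (-1)^m * real ((2*m) choose m)" by (simp add: b_def)
  ultimately have "(\<Sum>i\<le>2*m. b i) = (-1)^m * (real ((2*m) choose m) + 2 * S)"
    using lower upper by (simp add: algebra_simps)
  then show ?thesis by (simp add: b_def S_def)
qed

lemma alternating_sum_central_binomial:
  assumes "m \<ge> 1"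
  shows "(\<Sum>k=1..m. 2 * (-1)^(k+1) * real ((2*m) choose (m-k))) = real ((2*m) choose m)"
proof -
  have "(-1)^m * (real ((2*m) choose m) + 2 * (\<Sum>k=1..m. (-1)^k * real ((2*m) choose (m-k)))) = (0::real)"
    using alternating_sum_binomial_halves[of m] choose_alternating_sum[of "2*m", where 'a=real] assms
    by simp
  then have "real ((2*m) choose m) = - 2 * (\<Sum>k=1..m. (-1)^k * real ((2*m) choose (m-k)))"
    by simp
  also have "\<dots> = (\<Sum>k=1..m. 2 * (-1)^(k+1) * real ((2*m) choose (m-k)))"
    unfolding sum_distrib_left by (intro sum.cong refl) simp
  finally show ?thesis by simp
qed

lemma sum_hypo_coeff:
  assumes "m \<ge> 1"
  shows "(\<Sum>k=1..m. hypo_coeff m k) = 1"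
proof -
  have "(\<Sum>k=1..m. hypo_coeff m k)
      = (\<Sum>k=1..m. 2 * (-1)^(k+1) * real ((2*m) choose (m-k))) / real ((2*m) choose m)"
    by (simp add: hypo_coeff_eq_binomial sum_divide_distrib)
  then show ?thesis using alternating_sum_central_binomial[OF assms] by simp
qed

lemma sum_hypo_coeff_sq:
  assumes "m \<ge> 2"
  shows "(\<Sum>k=1..m. hypo_coeff m k * real k^2) = 0"
proof -
  have "real m^2 = (\<Sum>k=1..m. hypo_coeff m k * (real m^2 - real k^2) * 1)"
    using hypo_coeff_recurrence[of m "\<lambda>_. 1"] sum_hypo_coeff[of "m-1"] assms by simp
  also have "\<dots> = real m^2 - (\<Sum>k=1..m. hypo_coeff m k * real k^2)"
    using sum_hypo_coeff[of m] assms
    by (simp add: right_diff_distrib sum_subtractf sum_distrib_right[symmetric])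
  finally show ?thesis by simp
qed

lemma abs_hypo_coeff_le: "k \<le> m \<Longrightarrow> \<bar>hypo_coeff m k\<bar> \<le> 2"
  using binomial_maximum'[of m "m-k"]
  by (simp add: hypo_coeff_eq_binomial abs_mult field_simps)

lemma fact_eq_fact_diff_mult_prod: "k \<le> m \<Longrightarrow> (fact m :: real) = fact (m-k) * (\<Prod>i<k. real m - real i)"
proof (induction k)
  case (Suc k)
  have "m - k = Suc (m - Suc k)" using Suc.prems by auto
  then have "(fact (m-k) :: real) = (real m - real k) * fact (m - Suc k)"
    using Suc.prems by (simp add: of_nat_diff)
  with Suc show ?case by (simp add: algebra_simps)
qed simp

lemma fact_add_eq_fact_mult_prod: "(fact (m+k) :: real) = fact m * (\<Prod>i<k. real m + 1 + real i)"
  by (induction k) (auto simp: algebra_simps)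

lemma hypo_coeff_eq_prod:
  assumes "k \<le> m"
  shows "hypo_coeff m k = 2 * (-1)^(k+1) * (\<Prod>i<k. (real m - real i) / (real m + 1 + real i))"
proof -
  have "(\<Prod>i<k. real m + 1 + real i) \<noteq> 0" by (auto simp: add_pos_nonneg)
  then show ?thesis
    unfolding hypo_coeff_def power2_eq_square prod_dividef
    by (subst (2) fact_eq_fact_diff_mult_prod[OF assms], subst fact_add_eq_fact_mult_prod) simp
qed

lemma hypo_coeff_tendsto: "(\<lambda>m. hypo_coeff m k) \<longlonglongrightarrow> 2 * (-1)^(k+1)"
proof -
  have factor: "(\<lambda>m. (real m - real i) / (real m + 1 + real i)) \<longlonglongrightarrow> 1" for i
  proof -
    have "(\<lambda>m. 1 - (2 * real i + 1) / ((1 + real i) + real m)) \<longlonglongrightarrow> 1 - 0"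
      by (intro tendsto_diff tendsto_const tendsto_divide_0[OF tendsto_const]
          filterlim_at_top_imp_at_infinity filterlim_tendsto_add_at_top[OF tendsto_const filterlim_real_sequentially])
    moreover have "1 - (2 * real i + 1) / ((1 + real i) + real m) = (real m - real i) / (real m + 1 + real i)" for m
      by (simp add: field_simps add_pos_nonneg)
    ultimately show ?thesis by simp
  qed
  have "(\<lambda>m. 2 * (-1)^(k+1) * (\<Prod>i<k. (real m - real i) / (real m + 1 + real i))) \<longlonglongrightarrow> 2 * (-1)^(k+1) * (\<Prod>i<k. 1)"
    by (intro tendsto_mult tendsto_const tendsto_prod factor)
  then have "(\<lambda>m. 2 * (-1)^(k+1) * (\<Prod>i<k. (real m - real i) / (real m + 1 + real i))) \<longlonglongrightarrow> 2 * (-1)^(k+1)"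
    by simp
  then show ?thesis
    by (rule Lim_transform_eventually)
      (auto simp: eventually_sequentially hypo_coeff_eq_prod intro!: exI[of _ k])
qed

lemma hypo_coeff_sum_tendsto:
  fixes g :: "nat \<Rightarrow> real"
  assumes summable: "summable (\<lambda>k. \<bar>g (Suc k)\<bar>)"
  shows "(\<lambda>m. \<Sum>k=1..m. hypo_coeff m k * g k) \<longlonglongrightarrow> 2 * (\<Sum>k. (-1)^k * g (Suc k))"
proof -
  define a where "a k m = (if Suc k \<le> m then hypo_coeff m (Suc k) * g (Suc k) else 0)" for k m
  have lim: "(\<lambda>m. a k m) \<longlonglongrightarrow> 2 * (-1)^k * g (Suc k)" for k
  proof -
    have "(\<lambda>m. hypo_coeff m (Suc k) * g (Suc k)) \<longlonglongrightarrow> 2 * (-1)^(Suc k + 1) * g (Suc k)"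
      by (intro tendsto_mult hypo_coeff_tendsto tendsto_const)
    then have "(\<lambda>m. hypo_coeff m (Suc k) * g (Suc k)) \<longlonglongrightarrow> 2 * (-1)^k * g (Suc k)"
      by simp
    then show ?thesis
      by (rule Lim_transform_eventually) (auto simp: eventually_sequentially a_def intro!: exI[of _ "Suc k"])
  qed
  have bound: "norm (a k m) \<le> 2 * \<bar>g (Suc k)\<bar>" for k m
    using abs_hypo_coeff_le[of "Suc k" m] by (auto simp: a_def abs_mult intro!: mult_right_mono)
  have ev: "\<forall>\<^sub>F (k, m) in at_top \<times>\<^sub>F sequentially. norm (a k m) \<le> 2 * \<bar>g (Suc k)\<bar>"
    using bound by (intro always_eventually) auto
  have "summable (\<lambda>k. 2 * \<bar>g (Suc k)\<bar>)"
    using summable by simp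
  note tannerys_theorem[OF lim ev this sequentially_bot]
  then have "(\<lambda>m. \<Sum>k. a k m) \<longlonglongrightarrow> (\<Sum>k. 2 * (-1)^k * g (Suc k))"
    by blast
  moreover have "(\<Sum>k. a k m) = (\<Sum>k=1..m. hypo_coeff m k * g k)" for m
  proof -
    have "(\<Sum>k. a k m) = (\<Sum>k<m. a k m)"
      by (rule suminf_finite) (auto simp: a_def)
    then show ?thesis by (simp add: a_def sum.atLeast1_atMost_eq)
  qed
  moreover have "summable (\<lambda>k. (-1)^k * g (Suc k))"
    by (rule summable_rabs_cancel) (use summable in \<open>simp add: abs_mult\<close>)
  then have "(\<Sum>k. 2 * (-1)^k * g (Suc k)) = 2 * (\<Sum>k. (-1)^k * g (Suc k))"
    using suminf_mult[of "\<lambda>k. (-1)^k * g (Suc k)" 2] by (simp only: mult.assoc)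
  ultimately show ?thesis by (simp only:)
qed

section \<open>Sums of exponential variables with square rates\<close>

(* For x >= 0: the distribution function and the density of such a sum. *)
definition hypo_cdf :: "nat \<Rightarrow> real \<Rightarrow> real" where
  "hypo_cdf m x = 1 - (\<Sum>k=1..m. hypo_coeff m k * exp (- (real k^2 * x)))"

definition hypo_density :: "nat \<Rightarrow> real \<Rightarrow> real" where
  "hypo_density m x = (\<Sum>k=1..m. hypo_coeff m k * real k^2 * exp (- (real k^2 * x)))"

lemma hypo_coeff_1_1 [simp]: "hypo_coeff (Suc 0) (Suc 0) = 1"
  by (simp add: hypo_coeff_def)

lemma hypo_cdf_1: "hypo_cdf 1 x = 1 - exp (- x)"
  by (simp add: hypo_cdf_def)

lemma hypo_cdf_0: "m \<ge> 1 \<Longrightarrow> hypo_cdf m 0 = 0"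
  using sum_hypo_coeff[of m] by (simp add: hypo_cdf_def)

lemma hypo_density_0: "hypo_density m 0 = (if m = 1 then 1 else 0)"
  using sum_hypo_coeff_sq[of m] by (cases "m \<le> 1") (auto simp: hypo_density_def le_Suc_eq)

lemma hypo_cdf_deriv: "(hypo_cdf m has_real_derivative hypo_density m x) (at x)"
  unfolding hypo_cdf_def hypo_density_def
  by (auto intro!: derivative_eq_intros simp: sum_negf[symmetric] algebra_simps)

lemma hypo_density_deriv:
  assumes "m \<ge> 1"
  shows "(hypo_density m has_real_derivative real m^2 * (hypo_density (m-1) x - hypo_density m x)) (at x)"
proof -
  have "real m^2 * hypo_density (m-1) x
      = (\<Sum>k=1..m. hypo_coeff m k * (real m^2 - real k^2) * (real k^2 * exp (- (real k^2 * x))))"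
    unfolding hypo_density_def hypo_coeff_recurrence[OF assms] by (simp add: mult.assoc)
  also have "\<dots> = real m^2 * hypo_density m x - (\<Sum>k=1..m. hypo_coeff m k * real k^2 * (real k^2 * exp (- (real k^2 * x))))"
    unfolding hypo_density_def by (simp add: sum_distrib_left sum_subtractf[symmetric] algebra_simps)
  finally have "real m^2 * (hypo_density (m-1) x - hypo_density m x)
      = - (\<Sum>k=1..m. hypo_coeff m k * real k^2 * (real k^2 * exp (- (real k^2 * x))))"
    by (simp add: algebra_simps)
  then show ?thesis
    unfolding hypo_density_def
    by (auto intro!: derivative_eq_intros simp: sum_negf[symmetric] algebra_simps)
qed

lemma hypo_cdf_diff:
  assumes "m \<ge> 1"
  shows "hypo_cdf (m-1) x - hypo_cdf m x = hypo_density m x / real m^2"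
proof -
  have "real m^2 * (\<Sum>k=1..m-1. hypo_coeff (m-1) k * exp (- (real k^2 * x)))
      = real m^2 * (\<Sum>k=1..m. hypo_coeff m k * exp (- (real k^2 * x))) - hypo_density m x"
    unfolding hypo_coeff_recurrence[OF assms, symmetric] hypo_density_def
    by (simp add: sum_distrib_left sum_subtractf[symmetric] algebra_simps)
  then show ?thesis
    using assms unfolding hypo_cdf_def by (simp add: field_simps)
qed

lemma hypo_density_nonneg: "x \<ge> 0 \<Longrightarrow> hypo_density m x \<ge> 0"
proof (induction m arbitrary: x)
  case 0
  then show ?case by (simp add: hypo_density_def)
next
  case (Suc n)
  (* (exp (M y) * f_m y)' = M exp (M y) * f_(m-1) y, with M = m^2 *)
  define M where "M = real (Suc n)^2"
  define g where "g y = exp (M * y) * hypo_density (Suc n) y" for y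
  have deriv: "(g has_real_derivative M * exp (M * y) * hypo_density n y) (at y)" for y
    unfolding g_def M_def
    by (auto intro!: derivative_eq_intros hypo_density_deriv simp: algebra_simps)
  have "g 0 \<le> g x"
  proof (rule DERIV_nonneg_imp_nondecreasing[OF Suc.prems])
    fix y :: real
    assume "0 \<le> y"
    then show "\<exists>d. (g has_real_derivative d) (at y) \<and> 0 \<le> d"
      using deriv[of y] Suc.IH[of y] by (auto simp: M_def)
  qed
  moreover have "g 0 \<ge> 0" by (simp add: g_def hypo_density_0)
  ultimately have "0 \<le> g x" by linarith
  then show ?case by (simp add: g_def zero_le_mult_iff)
qed

lemma hypo_cdf_nonneg: "x \<ge> 0 \<Longrightarrow> hypo_cdf m x \<ge> 0"
proof (cases "m = 0")
  case False
  assume "x \<ge> 0"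
  then have "hypo_cdf m 0 \<le> hypo_cdf m x"
    by (rule DERIV_nonneg_imp_nondecreasing) (use hypo_cdf_deriv hypo_density_nonneg in blast)
  then show ?thesis using False by (simp add: hypo_cdf_0)
qed (simp add: hypo_cdf_def)

lemma hypo_cdf_antimono:
  assumes "x \<ge> 0" "j \<le> m"
  shows "hypo_cdf m x \<le> hypo_cdf j x"
proof (rule lift_Suc_antimono_le[of "\<lambda>m. hypo_cdf m x", OF _ assms(2)])
  fix n
  show "hypo_cdf (Suc n) x \<le> hypo_cdf n x"
  proof -
    have "0 \<le> hypo_density (Suc n) x / real (Suc n)^2"
      using hypo_density_nonneg[OF assms(1)] by simp
    then show ?thesis using hypo_cdf_diff[of "Suc n" x] by simp
  qed
qed

section \<open>The limit law\<close>

(* tau_density for x > 0, with the terms for k and -k merged, and its distribution function. *)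
definition tau_pdf :: "real \<Rightarrow> real" where
  "tau_pdf x = 2 * (\<Sum>k. (-1)^k * real (Suc k)^2 * exp (- (real (Suc k)^2 * x)))"

definition tau_cdf :: "real \<Rightarrow> real" where
  "tau_cdf x = 1 - 2 * (\<Sum>k. (-1)^k * exp (- (real (Suc k)^2 * x)))"

lemma sq_exp_le:
  assumes "a > 0" "k > 0"
  shows "real k^2 * exp (- (real k^2 * a)) \<le> 4 / a^2 * inverse (real k^2)"
proof -
  define y where "y = real k^2 * a"
  have y: "y > 0" using assms by (simp add: y_def)
  have "y / 2 \<le> exp (y / 2)" using exp_ge_add_one_self[of "y / 2"] by linarith
  then have "(y / 2)^2 \<le> exp (y / 2)^2" using y by (intro power_mono) auto
  also have "exp (y / 2)^2 = exp y" by (simp flip: exp_double)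
  finally have "y^2 / 4 \<le> exp y" by (simp add: power_divide)
  have "real k^2 * exp (- (real k^2 * a)) = real k^2 / exp y" by (simp add: y_def exp_minus field_simps)
  also have "\<dots> \<le> real k^2 / (y^2 / 4)"
    using \<open>y^2 / 4 \<le> exp y\<close> y assms by (intro divide_left_mono) auto
  also have "\<dots> = 4 / a^2 * inverse (real k^2)"
    using assms by (simp add: y_def field_simps power2_eq_square)
  finally show ?thesis .
qed

lemma summable_tau_majorant:
  assumes "a > 0"
  shows "summable (\<lambda>k. real (Suc k)^2 * exp (- (real (Suc k)^2 * a)))"
proof (rule summable_comparison_test'[where N=0])
  show "summable (\<lambda>k. 4 / a^2 * inverse (real (Suc k)^2))"
    using inverse_power_summable[of 2, where 'a=real] summable_Suc_iff[of "\<lambda>n. inverse (real n ^ 2)"]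
    by (intro summable_mult) (simp del: of_nat_Suc)
  show "norm (real (Suc k)^2 * exp (- (real (Suc k)^2 * a))) \<le> 4 / a^2 * inverse (real (Suc k)^2)" for k
    using sq_exp_le[OF assms, of "Suc k"] by (simp del: of_nat_Suc)
qed

lemma tau_pdf_term_le:
  assumes "a \<le> x"
  shows "\<bar>(-1)^k * real (Suc k)^2 * exp (- (real (Suc k)^2 * x))\<bar> \<le> real (Suc k)^2 * exp (- (real (Suc k)^2 * a))"
proof -
  have "real (Suc k)^2 * a \<le> real (Suc k)^2 * x"
    using assms by (rule mult_left_mono) simp
  then have "real (Suc k)^2 * exp (- (real (Suc k)^2 * x)) \<le> real (Suc k)^2 * exp (- (real (Suc k)^2 * a))"
    by (intro mult_left_mono) auto
  then show ?thesis by (simp add: abs_mult)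
qed

lemma tau_cdf_term_le:
  assumes "a \<le> x"
  shows "\<bar>(-1)^k * exp (- (real (Suc k)^2 * x))\<bar> \<le> real (Suc k)^2 * exp (- (real (Suc k)^2 * a))"
proof -
  have "\<bar>(-1)^k * exp (- (real (Suc k)^2 * x))\<bar> \<le> \<bar>(-1)^k * real (Suc k)^2 * exp (- (real (Suc k)^2 * x))\<bar>"
    by (simp add: abs_mult del: of_nat_Suc)
  also have "\<dots> \<le> real (Suc k)^2 * exp (- (real (Suc k)^2 * a))"
    using assms by (rule tau_pdf_term_le)
  finally show ?thesis .
qed

lemma tendsto_exp_neg_mult_at_top:
  assumes "c > 0"
  shows "((\<lambda>x. exp (- (c * x))) \<longlongrightarrow> (0::real)) at_top"
proof -
  have "filterlim (\<lambda>x. c * x) at_top at_top"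
    by (rule filterlim_tendsto_pos_mult_at_top[OF tendsto_const assms filterlim_ident])
  then have "filterlim (\<lambda>x. - (c * x)) at_bot at_top"
    by (simp add: filterlim_uminus_at_top)
  then show ?thesis by (rule filterlim_compose[OF exp_at_bot])
qed

lemma summable_tau_pdf_terms:
  assumes "x > 0"
  shows "summable (\<lambda>k. (-1)^k * real (Suc k)^2 * exp (- (real (Suc k)^2 * x)))"
  by (rule summable_norm_cancel, rule summable_comparison_test'[OF summable_tau_majorant[OF assms], where N=0])
    (use tau_pdf_term_le[of x x] in simp)

lemma hypo_cdf_tendsto: "x > 0 \<Longrightarrow> (\<lambda>m. hypo_cdf m x) \<longlonglongrightarrow> tau_cdf x"
  unfolding hypo_cdf_def tau_cdf_def
  by (intro tendsto_diff tendsto_const hypo_coeff_sum_tendsto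
      summable_comparison_test'[OF summable_tau_majorant, where N=0])
    (use tau_cdf_term_le[of x x] in auto)

lemma hypo_density_tendsto: "x > 0 \<Longrightarrow> (\<lambda>m. hypo_density m x) \<longlonglongrightarrow> tau_pdf x"
  using hypo_coeff_sum_tendsto[of "\<lambda>k. real k^2 * exp (- (real k^2 * x))"] summable_tau_majorant[of x]
  by (simp add: hypo_density_def tau_pdf_def mult.assoc del: of_nat_Suc)

lemma tau_pdf_nonneg: "x > 0 \<Longrightarrow> tau_pdf x \<ge> 0"
  by (rule LIMSEQ_le_const[OF hypo_density_tendsto]) (use hypo_density_nonneg in \<open>auto intro: less_imp_le\<close>)

lemma tau_cdf_bounds:
  assumes "x > 0"
  shows "0 \<le> tau_cdf x" "tau_cdf x \<le> 1 - exp (- x)"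
proof -
  show "0 \<le> tau_cdf x"
    by (rule LIMSEQ_le_const[OF hypo_cdf_tendsto[OF assms]]) (use assms hypo_cdf_nonneg in auto)
  have "tau_cdf x \<le> hypo_cdf 1 x"
    by (rule LIMSEQ_le_const2[OF hypo_cdf_tendsto[OF assms]])
      (use assms hypo_cdf_antimono in \<open>auto intro!: exI[of _ 1]\<close>)
  then show "tau_cdf x \<le> 1 - exp (- x)" using hypo_cdf_1[of x] by simp
qed

lemma tau_cdf_at_right_0: "(tau_cdf \<longlongrightarrow> 0) (at_right 0)"
proof (rule tendsto_sandwich[where f="\<lambda>_. 0" and h="\<lambda>x. 1 - exp (- x)"])
  show "\<forall>\<^sub>F x in at_right 0. 0 \<le> tau_cdf x" "\<forall>\<^sub>F x in at_right 0. tau_cdf x \<le> 1 - exp (- x)"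
    using tau_cdf_bounds by (auto simp: eventually_at_right_less eventually_at_filter)
  have "((\<lambda>x. 1 - exp (- x)) \<longlongrightarrow> 1 - exp (- 0)) (at_right (0::real))"
    by (intro tendsto_intros)
  then show "((\<lambda>x. 1 - exp (- x)) \<longlongrightarrow> (0::real)) (at_right 0)" by simp
qed simp

lemma tau_cdf_at_top: "(tau_cdf \<longlongrightarrow> 1) at_top"
proof -
  define a where "a k x = (-1)^k * exp (- (real (Suc k)^2 * x))" for k x
  have lim: "((\<lambda>x. a k x) \<longlongrightarrow> 0) at_top" for k
    unfolding a_def by (intro tendsto_mult_right_zero tendsto_exp_neg_mult_at_top) simp
  have "\<forall>\<^sub>F kx in (at_top::nat filter) \<times>\<^sub>F at_top. True \<and> (snd kx::real) \<ge> 1"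
    by (rule eventually_prodI) (auto simp: eventually_ge_at_top)
  then have ev: "\<forall>\<^sub>F (k, x) in at_top \<times>\<^sub>F at_top. norm (a k x) \<le> real (Suc k)^2 * exp (- (real (Suc k)^2 * 1))"
    by (rule eventually_mono) (use tau_cdf_term_le[of 1] in \<open>auto simp: a_def\<close>)
  note tannerys_theorem[OF lim ev summable_tau_majorant trivial_limit_at_top_linorder]
  then have "((\<lambda>x. \<Sum>k. a k x) \<longlongrightarrow> (\<Sum>k. 0)) at_top"
    by simp
  then have "((\<lambda>x. 1 - 2 * (\<Sum>k. a k x)) \<longlongrightarrow> 1 - 2 * 0) at_top"
    by (intro tendsto_intros) simp
  then show ?thesis by (simp add: tau_cdf_def[abs_def] a_def)
qed

lemma tau_cdf_deriv:
  assumes "x > 0"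
  shows "(tau_cdf has_real_derivative tau_pdf x) (at x)"
proof -
  define S where "S = {x/2<..}"
  define f where "f k y = (-1)^k * exp (- (real (Suc k)^2 * y))" for k y
  define f' where "f' k y = - ((-1)^k * real (Suc k)^2 * exp (- (real (Suc k)^2 * y)))" for k y
  have S: "convex S" "x \<in> S" "x \<in> interior S" using assms by (auto simp: S_def interior_open)
  have "(f k has_field_derivative f' k y) (at y within S)" for k y
    unfolding f_def f'_def by (auto intro!: derivative_eq_intros simp: algebra_simps)
  moreover have "norm (f' k y) \<le> real (Suc k)^2 * exp (- (real (Suc k)^2 * (x/2)))" if "y \<in> S" for k y
    using that tau_pdf_term_le[of "x/2" y k] by (simp add: S_def f'_def)
  then have "uniformly_convergent_on S (\<lambda>n y. \<Sum>i<n. f' i y)"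
    using summable_tau_majorant[of "x/2"] assms by (intro Weierstrass_m_test') auto
  moreover have "summable (\<lambda>k. f k x)"
    using tau_cdf_term_le[of x x] assms
    by (intro summable_comparison_test'[OF summable_tau_majorant[of x], where N=0]) (auto simp: f_def)
  ultimately have "((\<lambda>y. \<Sum>k. f k y) has_field_derivative (\<Sum>k. f' k x)) (at x)"
    using S by (intro has_field_derivative_series'(2)[where S=S]) (auto simp: interior_open)
  then have "((\<lambda>y. 1 - 2 * (\<Sum>k. f k y)) has_field_derivative (- 2 * (\<Sum>k. f' k x))) (at x)"
    by (auto intro!: derivative_eq_intros)
  moreover have "- 2 * (\<Sum>k. f' k x) = tau_pdf x"
    unfolding f'_def tau_pdf_def using suminf_minus[OF summable_tau_pdf_terms[OF assms]] by simp
  ultimately show ?thesis by (simp add: tau_cdf_def[abs_def] f_def)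
qed

lemma isCont_tau_pdf:
  assumes "x > 0"
  shows "isCont tau_pdf x"
proof -
  define S where "S = {x/2<..}"
  define f where "f k y = (-1)^k * real (Suc k)^2 * exp (- (real (Suc k)^2 * y))" for k y
  have "norm (f k y) \<le> real (Suc k)^2 * exp (- (real (Suc k)^2 * (x/2)))" if "y \<in> S" for k y
    using that tau_pdf_term_le[of "x/2" y k] by (simp add: S_def f_def)
  then have "uniform_limit S (\<lambda>n y. \<Sum>k<n. f k y) (\<lambda>y. \<Sum>k. f k y) sequentially"
    using summable_tau_majorant[of "x/2"] assms by (intro Weierstrass_m_test) auto
  then have "continuous_on S (\<lambda>y. 2 * (\<Sum>k. f k y))"
    by (intro continuous_intros uniform_limit_theorem[OF always_eventually])
      (auto simp: f_def intro!: continuous_intros)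
  then have "\<forall>y\<in>S. isCont (\<lambda>y. 2 * (\<Sum>k. f k y)) y"
    by (simp add: continuous_on_eq_continuous_at S_def)
  then show ?thesis
    using assms by (simp add: S_def f_def tau_pdf_def[abs_def])
qed

lemma has_sum_int_symmetric:
  fixes t :: "int \<Rightarrow> real"
  assumes pos: "\<And>n. t (int (Suc n)) = u n" and neg: "\<And>n. t (- int (Suc n)) = u n"
    and zero: "t 0 = 0" and u: "(u has_sum S) UNIV"
  shows "(t has_sum 2 * S) UNIV"
proof -
  define R where "R = range (\<lambda>n. int (Suc n)) \<union> range (\<lambda>n. - int (Suc n))"
  have inj: "inj (\<lambda>n. int (Suc n))" "inj (\<lambda>n. - int (Suc n))" by (auto simp: inj_on_def)
  have comp: "t \<circ> (\<lambda>n. int (Suc n)) = u" "t \<circ> (\<lambda>n. - int (Suc n)) = u"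
    by (simp_all only: comp_def pos neg)
  have "(t has_sum S) (range (\<lambda>n. int (Suc n)))" "(t has_sum S) (range (\<lambda>n. - int (Suc n)))"
    by (simp_all only: has_sum_reindex[OF inj(1)] has_sum_reindex[OF inj(2)] comp u)
  then have "(t has_sum S + S) R"
    unfolding R_def by (rule has_sum_Un_disjoint) auto
  then have "(t has_sum 2 * S) R" by (simp only: mult_2)
  moreover have "t k = 0" if "k \<notin> R" for k
  proof (cases "k = 0")
    case False
    then have "k = int (Suc (nat k - 1)) \<or> k = - int (Suc (nat (- k) - 1))" by linarith
    with that show ?thesis unfolding R_def by blast
  qed (simp add: zero)
  then have "(t has_sum 2 * S) UNIV \<longleftrightarrow> (t has_sum 2 * S) R"
    by (intro has_sum_cong_neutral) auto
  ultimately show ?thesis by simp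
qed

lemma tau_density_eq: "tau_density x = (if 0 < x then tau_pdf x else 0)"
proof (cases "x > 0")
  case True
  define u where "u n = (-1)^n * real (Suc n)^2 * exp (- (real (Suc n)^2 * x))" for n
  have "summable (\<lambda>n. norm (u n))"
    using True tau_pdf_term_le[of x x]
    by (intro summable_comparison_test'[OF summable_tau_majorant[of x], where N=0]) (auto simp: u_def)
  moreover have "u sums (tau_pdf x / 2)"
    using summable_tau_pdf_terms[OF True] unfolding u_def[abs_def] tau_pdf_def
    by (simp add: summable_sums)
  ultimately have "(u has_sum tau_pdf x / 2) UNIV"
    by (rule norm_summable_imp_has_sum)
  moreover have "(-1::real) powi (int (Suc n) + 1) = (-1)^n" "(-1::real) powi (- int (Suc n) + 1) = (-1)^n" for n
  proof -
    have "int (Suc n) + 1 = int (n + 2)" "- int (Suc n) + 1 = - int n" by simp_all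
    then show "(-1::real) powi (int (Suc n) + 1) = (-1)^n" "(-1::real) powi (- int (Suc n) + 1) = (-1)^n"
      by (simp_all only: power_int_of_nat power_int_minus_one_minus) simp
  qed
  ultimately have "((\<lambda>k. (-1) powi (k+1) * (real_of_int k)^2 * exp (- ((real_of_int k)^2 * x)))
      has_sum 2 * (tau_pdf x / 2)) UNIV"
    by (intro has_sum_int_symmetric) (simp_all add: u_def del: of_nat_Suc)
  then show ?thesis using True by (simp add: tau_density_def infsumI)
next
  case False
  then show ?thesis unfolding tau_density_def by (simp only: if_not_P if_False)
qed

section \<open>Integrals and Laplace transforms\<close>

lemma set_integral_Ioi_FTC_nonneg:
  fixes F f :: "real \<Rightarrow> real"
  assumes deriv: "\<And>x. a < x \<Longrightarrow> (F has_real_derivative f x) (at x)"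
    and cont: "\<And>x. a < x \<Longrightarrow> isCont f x"
    and nonneg: "\<And>x. a < x \<Longrightarrow> 0 \<le> f x"
    and lim_a: "(F \<longlongrightarrow> A) (at_right a)"
    and lim_top: "(F \<longlongrightarrow> B) at_top"
  shows "set_integrable lborel {a<..} f" "(LINT x:{a<..}|lborel. f x) = B - A"
proof -
  have "((F \<circ> real_of_ereal) \<longlongrightarrow> A) (at_right (ereal a))" "((F \<circ> real_of_ereal) \<longlongrightarrow> B) (at_left \<infinity>)"
    using lim_a lim_top by (simp_all add: ereal_tendsto_simps)
  note FTC = interval_integral_FTC_nonneg[OF _ _ _ _ this]
  have "set_integrable lborel (einterval a \<infinity>) f \<and> (LBINT x=ereal a..\<infinity>. f x) = B - A"
    using deriv cont nonneg by (intro conjI FTC) auto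
  then show "set_integrable lborel {a<..} f" "(LINT x:{a<..}|lborel. f x) = B - A"
    by (simp_all add: einterval_eq_Ici interval_lebesgue_integral_def)
qed

lemma hypo_cdf_at_top: "(hypo_cdf m \<longlongrightarrow> 1) at_top"
proof -
  have "((\<lambda>x. 1 - (\<Sum>k=1..m. hypo_coeff m k * exp (- (real k^2 * x)))) \<longlongrightarrow> 1 - (\<Sum>k=1..m. hypo_coeff m k * 0)) at_top"
    by (intro tendsto_intros tendsto_exp_neg_mult_at_top) auto
  then show ?thesis by (simp add: hypo_cdf_def[abs_def])
qed

lemma isCont_hypo_density: "isCont (hypo_density m) x"
  unfolding hypo_density_def by (intro continuous_intros)

lemma hypo_density_integral:
  assumes "m \<ge> 1"
  shows "set_integrable lborel {0<..} (hypo_density m)" "(LINT x:{0<..}|lborel. hypo_density m x) = 1"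
proof -
  have "(hypo_cdf m \<longlongrightarrow> hypo_cdf m 0) (at_right 0)"
    using DERIV_isCont[OF hypo_cdf_deriv] by (simp add: continuous_at_imp_continuous_at_within filterlim_at_split isCont_def)
  then have "(hypo_cdf m \<longlongrightarrow> 0) (at_right 0)" using hypo_cdf_0[OF assms] by simp
  then show "set_integrable lborel {0<..} (hypo_density m)" "(LINT x:{0<..}|lborel. hypo_density m x) = 1"
    using set_integral_Ioi_FTC_nonneg[OF hypo_cdf_deriv isCont_hypo_density _ _ hypo_cdf_at_top]
      hypo_density_nonneg by auto
qed

lemma hypo_coeff_partial_fractions:
  assumes "m \<ge> 1" "s \<ge> 0"
  shows "(\<Sum>k=1..m. hypo_coeff m k * real k^2 / (real k^2 + s)) = (\<Prod>i<m. inverse (1 + s / real (Suc i)^2))"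
  using assms(1)
proof (induction m rule: nat_induct_at_least)
  case base
  have "1 + s \<noteq> 0" using assms(2) by simp
  then show ?case by (simp add: field_simps)
next
  case (Suc n)
  define P where "P m = (\<Sum>k=1..m. hypo_coeff m k * real k^2 / (real k^2 + s))" for m
  define M where "M = real (Suc n)^2"
  have factor: "hypo_coeff (Suc n) k * (M - real k^2) * (real k^2 / (real k^2 + s))
      = (M + s) * (hypo_coeff (Suc n) k * real k^2 / (real k^2 + s)) - hypo_coeff (Suc n) k * real k^2"
    if "k \<ge> 1" for k
  proof -
    have "real k^2 + s > 0" using that assms(2) by (intro add_pos_nonneg) auto
    then show ?thesis by (simp add: field_simps)
  qed
  have "M * P n = (\<Sum>k=1..Suc n. hypo_coeff (Suc n) k * (M - real k^2) * (real k^2 / (real k^2 + s)))"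
    using hypo_coeff_recurrence[of "Suc n" "\<lambda>k. real k^2 / (real k^2 + s)"] by (simp add: P_def M_def)
  also have "\<dots> = (\<Sum>k=1..Suc n. (M + s) * (hypo_coeff (Suc n) k * real k^2 / (real k^2 + s))
                                   - hypo_coeff (Suc n) k * real k^2)"
    by (rule sum.cong[OF refl], rule factor) simp
  also have "\<dots> = (M + s) * P (Suc n) - (\<Sum>k=1..Suc n. hypo_coeff (Suc n) k * real k^2)"
    by (simp only: P_def sum_subtractf sum_distrib_left)
  also have "(\<Sum>k=1..Suc n. hypo_coeff (Suc n) k * real k^2) = 0"
    using Suc.hyps by (intro sum_hypo_coeff_sq) simp
  finally have "M * P n = (M + s) * P (Suc n)" by simp
  moreover have "M > 0" "M + s > 0" using assms(2) by (simp_all add: M_def add_pos_nonneg)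
  ultimately have "P (Suc n) = inverse (1 + s / real (Suc n)^2) * P n"
    by (simp add: M_def field_simps)
  then show ?case using Suc.IH by (simp add: P_def)
qed

lemma hypo_density_laplace_antideriv:
  assumes "s \<ge> 0"
  shows "((\<lambda>x. - (\<Sum>k=1..m. hypo_coeff m k * real k^2 / (real k^2 + s) * exp (- ((real k^2 + s) * x))))
          has_real_derivative exp (- s * x) * hypo_density m x) (at x)"
proof -
  define C where "C k = hypo_coeff m k * real k^2 / (real k^2 + s)" for k
  have "C k * (exp (- ((real k^2 + s) * x)) * (real k^2 + s))
      = exp (- s * x) * (hypo_coeff m k * real k^2 * exp (- (real k^2 * x)))" if "k \<ge> 1" for k
  proof -
    have "real k^2 + s > 0" using that assms by (intro add_pos_nonneg) auto
    moreover have "exp (- ((real k^2 + s) * x)) = exp (- s * x) * exp (- (real k^2 * x))"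
      by (simp add: exp_add[symmetric] algebra_simps)
    ultimately show ?thesis by (simp add: C_def)
  qed
  then have "(\<Sum>k=1..m. C k * (exp (- ((real k^2 + s) * x)) * (real k^2 + s))) = exp (- s * x) * hypo_density m x"
    unfolding hypo_density_def sum_distrib_left by (intro sum.cong) auto
  moreover have "((\<lambda>x. C k * exp (- ((real k^2 + s) * x))) has_real_derivative
      - (C k * (exp (- ((real k^2 + s) * x)) * (real k^2 + s)))) (at x)" for k
    by (auto intro!: derivative_eq_intros simp: algebra_simps)
  then have "((\<lambda>x. - (\<Sum>k=1..m. C k * exp (- ((real k^2 + s) * x)))) has_real_derivative
      - (\<Sum>k=1..m. - (C k * (exp (- ((real k^2 + s) * x)) * (real k^2 + s))))) (at x)"
    by (intro DERIV_minus DERIV_sum)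
  ultimately show ?thesis by (simp add: sum_negf C_def)
qed

lemma hypo_density_laplace:
  assumes "m \<ge> 1" "s \<ge> 0"
  shows "set_integrable lborel {0<..} (\<lambda>x. exp (- s * x) * hypo_density m x)"
    "(LINT x:{0<..}|lborel. exp (- s * x) * hypo_density m x) = (\<Prod>i<m. inverse (1 + s / real (Suc i)^2))"
proof -
  define \<Psi> where "\<Psi> x = - (\<Sum>k=1..m. hypo_coeff m k * real k^2 / (real k^2 + s) * exp (- ((real k^2 + s) * x)))" for x
  have "(\<Psi> \<longlongrightarrow> \<Psi> 0) (at_right 0)"
    unfolding \<Psi>_def by (intro tendsto_intros)
  moreover have "\<Psi> 0 = - (\<Prod>i<m. inverse (1 + s / real (Suc i)^2))"
    using hypo_coeff_partial_fractions[OF assms] by (simp add: \<Psi>_def)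
  ultimately have lim_0: "(\<Psi> \<longlongrightarrow> - (\<Prod>i<m. inverse (1 + s / real (Suc i)^2))) (at_right 0)"
    by simp
  have "(\<Psi> \<longlongrightarrow> - (\<Sum>k=1..m. hypo_coeff m k * real k^2 / (real k^2 + s) * 0)) at_top"
    unfolding \<Psi>_def using assms(2)
    by (intro tendsto_intros tendsto_exp_neg_mult_at_top) (auto simp: add_pos_nonneg)
  then have lim_top: "(\<Psi> \<longlongrightarrow> 0) at_top" by simp
  have deriv: "(\<Psi> has_real_derivative exp (- s * x) * hypo_density m x) (at x)" for x
    unfolding \<Psi>_def[abs_def] by (rule hypo_density_laplace_antideriv[OF assms(2)])
  have cont: "isCont (\<lambda>x. exp (- s * x) * hypo_density m x) x" for x
    by (intro continuous_intros isCont_hypo_density)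
  have nonneg: "0 \<le> exp (- s * x) * hypo_density m x" if "0 < x" for x
    using hypo_density_nonneg[of x m] that by simp
  show "set_integrable lborel {0<..} (\<lambda>x. exp (- s * x) * hypo_density m x)"
    "(LINT x:{0<..}|lborel. exp (- s * x) * hypo_density m x) = (\<Prod>i<m. inverse (1 + s / real (Suc i)^2))"
    using set_integral_Ioi_FTC_nonneg[OF deriv cont nonneg lim_0 lim_top] by simp_all
qed

lemma tau_pdf_integral:
  shows "set_integrable lborel {0<..} tau_pdf" "(LINT x:{0<..}|lborel. tau_pdf x) = 1"
  using set_integral_Ioi_FTC_nonneg[OF tau_cdf_deriv isCont_tau_pdf tau_pdf_nonneg
      tau_cdf_at_right_0 tau_cdf_at_top]
  by simp_all

lemma tau_density_indicator: "tau_density x = indicator {0<..} x * tau_pdf x"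
  by (simp add: tau_density_eq)

lemma tau_density_nonneg: "tau_density x \<ge> 0"
  by (simp add: tau_density_eq tau_pdf_nonneg)

lemma integrable_tau_density: "integrable lborel tau_density"
  using tau_pdf_integral(1) by (simp add: set_integrable_def tau_density_indicator[abs_def])

lemma integral_tau_density: "(LINT x|lborel. tau_density x) = 1"
  using tau_pdf_integral(2) by (simp add: set_lebesgue_integral_def tau_density_indicator[abs_def])

lemma borel_measurable_tau_density [measurable]: "tau_density \<in> borel_measurable borel"
  using borel_measurable_integrable[OF integrable_tau_density] by simp

lemma prob_space_tau_law: "prob_space tau_law"
proof
  have "emeasure tau_law (space tau_law) = (\<integral>\<^sup>+x. ennreal (tau_density x) \<partial>lborel)"
    unfolding tau_law_def by (subst emeasure_density) simp_all
  also have "\<dots> = ennreal (LINT x|lborel. tau_density x)"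
    by (intro nn_integral_eq_integral integrable_tau_density) (simp add: tau_density_nonneg)
  finally show "emeasure tau_law (space tau_law) = 1" by (simp add: integral_tau_density)
qed

lemma integral_tau_law:
  "f \<in> borel_measurable borel \<Longrightarrow> (\<integral>x. f x \<partial>tau_law) = (LINT x|lborel. tau_density x * f x)"
  unfolding tau_law_def
  by (subst integral_density) (simp_all add: tau_density_nonneg borel_measurable_tau_density)

lemma measure_tau_law: "A \<in> sets borel \<Longrightarrow> measure tau_law A = (LINT x:A|lborel. tau_density x)"
proof -
  assume "A \<in> sets borel"
  have "space tau_law = UNIV" by (simp add: tau_law_def)
  then have "measure tau_law A = (\<integral>x. indicator A x \<partial>tau_law)" by simp
  also have "\<dots> = (LINT x:A|lborel. tau_density x)"
    using \<open>A \<in> sets borel\<close>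
    by (subst integral_tau_law) (auto simp: set_lebesgue_integral_def mult.commute)
  finally show ?thesis .
qed

lemma cdf_tau_law: "cdf tau_law x = (if x \<le> 0 then 0 else tau_cdf x)"
proof (cases "x \<le> 0")
  case True
  then have "(\<lambda>y. indicator {..x} y *\<^sub>R tau_density y) = (\<lambda>_. 0)"
    by (auto simp: tau_density_eq indicator_def)
  then have "(LINT y:{..x}|lborel. tau_density y) = 0"
    by (simp add: set_lebesgue_integral_def)
  then show ?thesis using True by (simp add: cdf_def measure_tau_law)
next
  case False
  have "(tau_cdf \<longlongrightarrow> tau_cdf x) (at_right x)"
    using DERIV_isCont[OF tau_cdf_deriv] False by (simp add: filterlim_at_split isCont_def)
  then have "(LINT y:{x<..}|lborel. tau_pdf y) = 1 - tau_cdf x"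
    using set_integral_Ioi_FTC_nonneg[OF tau_cdf_deriv isCont_tau_pdf tau_pdf_nonneg _ tau_cdf_at_top] False
    by auto
  moreover have "(LINT y:{x<..}|lborel. tau_density y) = (LINT y:{x<..}|lborel. tau_pdf y)"
    using False by (intro set_lebesgue_integral_cong) (auto simp: tau_density_eq)
  moreover have "measure tau_law {..x} = 1 - measure tau_law {x<..}"
    using prob_space.prob_compl[OF prob_space_tau_law, of "{x<..}"]
    by (simp add: tau_law_def Compl_eq_Diff_UNIV[symmetric] not_less atMost_def greaterThan_def Compl_eq)
  ultimately show ?thesis using False by (simp add: cdf_def measure_tau_law)
qed

definition hypo_pdf :: "nat \<Rightarrow> real \<Rightarrow> real" where
  "hypo_pdf m x = indicator {0<..} x * hypo_density m x"

lemma borel_measurable_hypo_pdf [measurable]: "hypo_pdf m \<in> borel_measurable borel"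
proof -
  have [measurable]: "hypo_density m \<in> borel_measurable borel"
    by (intro borel_measurable_continuous_onI continuous_at_imp_continuous_on ballI isCont_hypo_density)
  show ?thesis unfolding hypo_pdf_def[abs_def] by measurable
qed

lemma hypo_pdf_nonneg: "hypo_pdf m x \<ge> 0"
  by (simp add: hypo_pdf_def indicator_def hypo_density_nonneg)

lemma hypo_pdf_0 [simp]: "hypo_pdf 0 x = 0"
  by (simp add: hypo_pdf_def hypo_density_def)

lemma integrable_hypo_pdf: "integrable lborel (hypo_pdf m)"
proof (cases "m = 0")
  case False
  then show ?thesis
    using hypo_density_integral(1)[of m] by (simp add: set_integrable_def hypo_pdf_def[abs_def])
next
  case True
  then have "hypo_pdf m = (\<lambda>_. 0)" by auto
  then show ?thesis by simp
qed

lemma integral_hypo_pdf: "m \<ge> 1 \<Longrightarrow> (LINT x|lborel. hypo_pdf m x) = 1"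
  using hypo_density_integral(2)[of m] by (simp add: set_lebesgue_integral_def hypo_pdf_def[abs_def])

lemma hypo_pdf_tendsto: "(\<lambda>m. hypo_pdf m x) \<longlonglongrightarrow> tau_density x"
  using hypo_density_tendsto[of x] by (cases "x > 0") (simp_all add: hypo_pdf_def tau_density_eq)

lemma hypo_pdf_L1_tendsto: "(\<lambda>m. LINT x|lborel. \<bar>hypo_pdf m x - tau_density x\<bar>) \<longlonglongrightarrow> 0"
proof -
  have nn_integral_1: "(\<integral>\<^sup>+x. norm (f x) \<partial>lborel) = 1"
    if "integrable lborel f" "\<And>x. f x \<ge> 0" "(LINT x|lborel. f x) = 1" for f :: "real \<Rightarrow> real"
    using that by (simp add: nn_integral_eq_integral)
  have "(\<integral>\<^sup>+x. norm (hypo_pdf m x) \<partial>lborel) \<le> (\<integral>\<^sup>+x. norm (tau_density x) \<partial>lborel)" for m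
    using nn_integral_1[OF integrable_tau_density tau_density_nonneg integral_tau_density]
      nn_integral_1[OF integrable_hypo_pdf hypo_pdf_nonneg integral_hypo_pdf, of m]
    by (cases "m = 0") simp_all
  then have "(\<lambda>m. \<integral>\<^sup>+x. norm (hypo_pdf m x - tau_density x) \<partial>lborel) \<longlonglongrightarrow> 0"
    by (intro Scheffe_lemma2) (simp_all add: integrable_tau_density hypo_pdf_tendsto)
  moreover have "(\<integral>\<^sup>+x. ennreal \<bar>hypo_pdf m x - tau_density x\<bar> \<partial>lborel)
      = ennreal (LINT x|lborel. \<bar>hypo_pdf m x - tau_density x\<bar>)" for m
    by (intro nn_integral_eq_integral integrable_abs Bochner_Integration.integrable_diff
        integrable_hypo_pdf integrable_tau_density) simp
  ultimately show ?thesis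
    by (intro tendsto_ennrealD) (simp_all add: integral_nonneg_AE)
qed

lemma laplace_hypo_pdf:
  assumes "m \<ge> 1" "s \<ge> 0"
  shows "integrable lborel (\<lambda>x. hypo_pdf m x * exp (- s * x))"
    "(LINT x|lborel. hypo_pdf m x * exp (- s * x)) = (\<Prod>i<m. inverse (1 + s / real (Suc i)^2))"
  using hypo_density_laplace[OF assms]
  by (simp_all add: set_integrable_def set_lebesgue_integral_def hypo_pdf_def[abs_def] mult_ac)

lemma laplace_hypo_pdf_tendsto:
  assumes "s \<ge> 0"
  shows "(\<lambda>m. \<Prod>i<m. inverse (1 + s / real (Suc i)^2)) \<longlonglongrightarrow> (LINT x|lborel. tau_density x * exp (- s * x))"
proof -
  define L where "L = (LINT x|lborel. tau_density x * exp (- s * x))"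
  have damp: "\<bar>(f x) * exp (- s * x)\<bar> \<le> \<bar>f x\<bar>" if "x \<le> 0 \<Longrightarrow> f x = 0" for f :: "real \<Rightarrow> real" and x
    using that assms by (cases "x > 0") (auto simp: abs_mult mult_left_le)
  have "\<bar>tau_density x * exp (- s * x)\<bar> \<le> \<bar>tau_density x\<bar>" for x
    by (rule damp) (simp add: tau_density_eq)
  then have int_L: "integrable lborel (\<lambda>x. tau_density x * exp (- s * x))"
    by (intro Bochner_Integration.integrable_bound[OF integrable_tau_density] AE_I2) simp_all
  have "norm ((\<Prod>i<m. inverse (1 + s / real (Suc i)^2)) - L) \<le> (LINT x|lborel. \<bar>hypo_pdf m x - tau_density x\<bar>)"
    if "m \<ge> 1" for m
  proof -
    have "(\<Prod>i<m. inverse (1 + s / real (Suc i)^2)) - L = (LINT x|lborel. (hypo_pdf m x - tau_density x) * exp (- s * x))"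
      using laplace_hypo_pdf[OF that assms] int_L by (simp add: L_def left_diff_distrib)
    also have "\<bar>\<dots>\<bar> \<le> (LINT x|lborel. \<bar>hypo_pdf m x - tau_density x\<bar>)"
    proof (rule integral_abs_bound_integral)
      show "integrable lborel (\<lambda>x. (hypo_pdf m x - tau_density x) * exp (- s * x))"
        unfolding left_diff_distrib
        by (intro Bochner_Integration.integrable_diff laplace_hypo_pdf(1)[OF that assms] int_L)
      show "integrable lborel (\<lambda>x. \<bar>hypo_pdf m x - tau_density x\<bar>)"
        by (intro integrable_abs Bochner_Integration.integrable_diff integrable_hypo_pdf integrable_tau_density)
      show "\<bar>(hypo_pdf m x - tau_density x) * exp (- s * x)\<bar> \<le> \<bar>hypo_pdf m x - tau_density x\<bar>" for x
        by (rule damp) (simp add: hypo_pdf_def tau_density_eq)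
    qed
    finally show ?thesis by simp
  qed
  then have "(\<lambda>m. (\<Prod>i<m. inverse (1 + s / real (Suc i)^2)) - L) \<longlonglongrightarrow> 0"
    by (intro Lim_null_comparison[OF _ hypo_pdf_L1_tendsto]) (auto simp: eventually_sequentially)
  then show ?thesis unfolding L_def by (simp add: LIM_zero_iff)
qed

lemma tendsto_prod_inverse:
  assumes "s \<ge> 0"
  shows "(\<lambda>n. \<Prod>i<n. inverse (1 + s / real (Suc i)^2)) \<longlonglongrightarrow> (\<Prod>i. inverse (1 + s / real (Suc i)^2))"
proof -
  have "summable (\<lambda>i. \<bar>s / real (Suc i)^2\<bar>)"
    using assms inverse_power_summable[of 2, where 'a=real] summable_Suc_iff[of "\<lambda>n. inverse (real n ^ 2)"]
    by (simp add: divide_inverse summable_mult del: of_nat_Suc)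
  moreover have "s / real (Suc i)^2 \<noteq> -1" for i
  proof -
    have "0 \<le> s / real (Suc i)^2" using assms by simp
    then show ?thesis by linarith
  qed
  ultimately have "convergent_prod (\<lambda>i. 1 + s / real (Suc i)^2)"
    by (rule summable_imp_convergent_prod_real)
  then have "(\<lambda>n. \<Prod>i\<le>n. inverse (1 + s / real (Suc i)^2)) \<longlonglongrightarrow> (\<Prod>i. inverse (1 + s / real (Suc i)^2))"
    by (intro convergent_prod_LIMSEQ convergent_prod_inverse)
  then show ?thesis by (simp add: LIMSEQ_lessThan_iff_atMost)
qed

lemma sinh_product:
  assumes "s > 0"
  shows "(\<lambda>n. \<Prod>k=1..n. 1 + s / real k^2) \<longlonglongrightarrow> sinh (pi * sqrt s) / (pi * sqrt s)"
proof -
  define z where "z = \<i> * complex_of_real (sqrt s)"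
  define w where "w = \<i> * complex_of_real (pi * sqrt s)"
  have "z^2 = - complex_of_real s"
    using assms by (simp add: z_def power_mult_distrib flip: of_real_power)
  then have "(\<Prod>k=1..n. 1 - z^2 / of_nat k^2) = complex_of_real (\<Prod>k=1..n. 1 + s / real k^2)" for n
    by (simp add: of_real_prod)
  moreover have "of_real pi * z = w" by (simp add: z_def w_def)
  moreover have "sin w = \<i> * complex_of_real (sinh (pi * sqrt s))"
  proof -
    have "sin w = \<i> * ((exp (complex_of_real (pi * sqrt s)) - inverse (exp (complex_of_real (pi * sqrt s)))) / 2)"
      unfolding w_def by (rule sin_i_times)
    also have "(exp (complex_of_real (pi * sqrt s)) - inverse (exp (complex_of_real (pi * sqrt s)))) / 2
        = complex_of_real (sinh (pi * sqrt s))"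
      by (simp add: sinh_def exp_minus flip: exp_of_real)
    finally show ?thesis .
  qed
  ultimately have "(\<lambda>n. w * complex_of_real (\<Prod>k=1..n. 1 + s / real k^2)) \<longlonglongrightarrow> \<i> * complex_of_real (sinh (pi * sqrt s))"
    using sin_product_formula_complex[of z] by simp
  then have "(\<lambda>n. w * complex_of_real (\<Prod>k=1..n. 1 + s / real k^2) / w) \<longlonglongrightarrow> \<i> * complex_of_real (sinh (pi * sqrt s)) / w"
    using assms by (intro tendsto_divide tendsto_const) (auto simp: w_def)
  then have "(\<lambda>n. complex_of_real (\<Prod>k=1..n. 1 + s / real k^2)) \<longlonglongrightarrow> complex_of_real (sinh (pi * sqrt s) / (pi * sqrt s))"
    using assms by (simp add: w_def del: of_real_prod)
  then show ?thesis by (simp only: tendsto_of_real_iff)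
qed

lemma prodinf_inverse_eq_sinh:
  assumes "s > 0"
  shows "(\<Prod>i. inverse (1 + s / real (Suc i)^2)) = pi * sqrt s / sinh (pi * sqrt s)"
proof -
  have "(\<lambda>n. inverse (\<Prod>k=1..n. 1 + s / real k^2)) \<longlonglongrightarrow> inverse (sinh (pi * sqrt s) / (pi * sqrt s))"
    using assms by (intro tendsto_inverse sinh_product) auto
  moreover have "inverse (\<Prod>k=1..n. 1 + s / real k^2) = (\<Prod>i<n. inverse (1 + s / real (Suc i)^2))" for n
    by (simp add: prod_inversef[symmetric] prod.atLeast1_atMost_eq)
  ultimately have "(\<lambda>n. \<Prod>i<n. inverse (1 + s / real (Suc i)^2)) \<longlonglongrightarrow> pi * sqrt s / sinh (pi * sqrt s)"
    by simp
  with tendsto_prod_inverse show ?thesis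
    using assms by (intro LIMSEQ_unique) auto
qed

lemma laplace_tau_law:
  assumes "\<sigma> \<ge> 0"
  shows "(\<integral>x. exp (- \<sigma> * x) \<partial>tau_law) = (\<Prod>m. inverse (1 + \<sigma> / real (Suc m)^2))"
proof -
  have "(\<integral>x. exp (- \<sigma> * x) \<partial>tau_law) = (LINT x|lborel. tau_density x * exp (- \<sigma> * x))"
    by (rule integral_tau_law) measurable
  also have "\<dots> = (\<Prod>m. inverse (1 + \<sigma> / real (Suc m)^2))"
    using laplace_hypo_pdf_tendsto[OF assms] tendsto_prod_inverse[OF assms] by (rule LIMSEQ_unique)
  finally show ?thesis .
qed

section \<open>The jump chain\<close>

definition owner :: "nat \<Rightarrow> config \<Rightarrow> nat \<Rightarrow> nat" where
  "owner N c p = (SOME v. v \<le> N \<and> p \<in> set (c v))"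

definition move :: "config \<Rightarrow> nat \<Rightarrow> nat \<Rightarrow> nat \<Rightarrow> config" where
  "move c v p w = c(v := remove1 p (c v), w := p # c w)"

lemma dsf_step_eq:
  "dsf_step N c = pmf_of_set {0..N} \<bind> (\<lambda>p. pmf_of_set ({0..N} - {owner N c p}) \<bind>
     (\<lambda>w. return_pmf (if p = last (c (owner N c p)) then c else move c (owner N c p) p w)))"
  unfolding dsf_step_def Let_def owner_def move_def ..

lemma valid_config_memD:
  assumes "valid_config N c" "p \<in> set (c v)"
  shows "v \<le> N" "p \<le> N"
proof -
  show "v \<le> N" using assms unfolding valid_config_def by (metis empty_iff empty_set not_le)
  then show "p \<le> N" using assms unfolding valid_config_def by auto
qed

lemma valid_config_owner:
  assumes "valid_config N c" "p \<le> N"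
  shows "owner N c p \<le> N" "p \<in> set (c (owner N c p))"
proof -
  have "p \<in> (\<Union>v\<in>{0..N}. set (c v))" using assms unfolding valid_config_def by auto
  then have "\<exists>v. v \<le> N \<and> p \<in> set (c v)" by auto
  then show "owner N c p \<le> N" "p \<in> set (c (owner N c p))"
    unfolding owner_def by (metis (mono_tags, lifting) someI_ex)+
qed

lemma owner_eq:
  assumes "valid_config N c" "p \<in> set (c v)"
  shows "owner N c p = v"
  using assms valid_config_owner[OF assms(1) valid_config_memD(2)[OF assms]]
  unfolding valid_config_def by blast

lemma valid_config_move:
  assumes V: "valid_config N c" and p: "p \<in> set (c v)" and w: "w \<le> N" "w \<noteq> v"
  shows "valid_config N (move c v p w)"
proof -
  have d: "distinct (c u)" for u using V unfolding valid_config_def by blast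
  have dj: "set (c u) \<inter> set (c u') = {}" if "u \<noteq> u'" for u u'
    using V that unfolding valid_config_def by blast
  have set_move: "set (move c v p w u) =
      (if u = w then insert p (set (c w)) else if u = v then set (c v) - {p} else set (c u))" for u
    using w(2) d[of v] by (simp add: move_def set_remove1_eq)
  have "p \<notin> set (c w)" using dj[OF w(2)] p by blast
  then have "distinct (move c v p w u)" for u
    using d w(2) by (simp add: move_def distinct_remove1)
  moreover have "set (move c v p w u) \<inter> set (move c v p w u') = {}" if "u \<noteq> u'" for u u'
    unfolding set_move using that dj p w(2) by (auto split: if_splits)
  moreover have "(\<Union>u\<in>{0..N}. set (move c v p w u)) = (\<Union>u\<in>{0..N}. set (c u))"
    unfolding set_move using p w valid_config_memD(1)[OF V p] by (auto split: if_splits)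
  moreover have "N < u \<Longrightarrow> move c v p w u = []" for u
    using V w valid_config_memD(1)[OF V p] unfolding valid_config_def move_def by auto
  ultimately show ?thesis using V unfolding valid_config_def by simp
qed

lemma empty_vertices_move:
  assumes "valid_config N c" "p \<in> set (c v)" "w \<le> N" "w \<noteq> v" "p \<noteq> last (c v)"
  shows "empty_vertices N (move c v p w) = empty_vertices N c - {w}"
proof -
  have "distinct (c v)" using assms(1) unfolding valid_config_def by blast
  then have "remove1 p (c v) \<noteq> []"
    using assms(2,5) by (cases "c v" rule: rev_cases) (auto simp: remove1_append)
  then show ?thesis using assms(2-4) by (auto simp: empty_vertices_def move_def)
qed

lemma card_bottom_particles:
  assumes V: "valid_config N c"
  shows "card {p\<in>{0..N}. p = last (c (owner N c p))} = N + 1 - card (empty_vertices N c)"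
proof -
  define NE where "NE = {v\<in>{0..N}. c v \<noteq> []}"
  have "NE \<union> empty_vertices N c = {0..N}" "NE \<inter> empty_vertices N c = {}"
    by (auto simp: NE_def empty_vertices_def)
  then have card_NE: "card NE + card (empty_vertices N c) = N + 1"
    by (metis card_Un_disjoint card_atLeastAtMost finite_Un finite_atLeastAtMost diff_zero Suc_eq_plus1)
  have "{p\<in>{0..N}. p = last (c (owner N c p))} = (\<lambda>v. last (c v)) ` NE"
  proof (intro equalityI subsetI)
    fix p assume "p \<in> {p\<in>{0..N}. p = last (c (owner N c p))}"
    then show "p \<in> (\<lambda>v. last (c v)) ` NE"
      using valid_config_owner[OF V, of p] unfolding NE_def by (intro image_eqI[of _ _ "owner N c p"]) auto
  next
    fix p assume "p \<in> (\<lambda>v. last (c v)) ` NE"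
    then obtain v where v: "v \<in> NE" "p = last (c v)" by blast
    then have "p \<in> set (c v)" by (simp add: NE_def)
    then show "p \<in> {p\<in>{0..N}. p = last (c (owner N c p))}"
      using v valid_config_memD(2)[OF V] owner_eq[OF V] by auto
  qed
  moreover have "inj_on (\<lambda>v. last (c v)) NE"
  proof (rule inj_onI)
    fix u v assume "u \<in> NE" "v \<in> NE" "last (c u) = last (c v)"
    then have "last (c u) \<in> set (c u)" "last (c u) \<in> set (c v)"
      by (auto simp: NE_def) (metis last_in_set)
    then show "u = v" using V unfolding valid_config_def by blast
  qed
  ultimately show ?thesis using card_NE by (simp add: card_image)
qed

lemma card_empty_vertices_le:
  assumes "valid_config N c"
  shows "card (empty_vertices N c) \<le> N"
proof -
  have "empty_vertices N c \<subseteq> {0..N} - {owner N c 0}"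
    using valid_config_owner[OF assms, of 0] by (auto simp: empty_vertices_def)
  then have "card (empty_vertices N c) \<le> card ({0..N} - {owner N c 0})" by (intro card_mono) auto
  then show ?thesis using valid_config_owner[OF assms, of 0] by simp
qed

lemma halted_iff_no_empty_vertices:
  assumes V: "valid_config N c"
  shows "halted N c \<longleftrightarrow> empty_vertices N c = {}"
proof
  assume "halted N c"
  then show "empty_vertices N c = {}"
    unfolding halted_def empty_vertices_def
    by (metis (mono_tags, lifting) Collect_empty_eq atLeastAtMost_iff list.size(3) zero_neq_one)
next
  assume E: "empty_vertices N c = {}"
  have "(\<Sum>v\<in>{0..N}. length (c v)) = card (\<Union>v\<in>{0..N}. set (c v))"
    using V by (subst card_UN_disjoint) (auto simp: valid_config_def distinct_card)
  also have "\<dots> = (\<Sum>v\<in>{0..N}. 1)" using V by (simp add: valid_config_def)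
  finally have sum_length: "(\<Sum>v\<in>{0..N}. length (c v)) = (\<Sum>v\<in>{0..N}. 1)" .
  have len: "length (c v) \<ge> 1" if "v \<in> {0..N}" for v
    using E that by (auto simp: empty_vertices_def Suc_le_eq)
  then have "(\<Sum>v\<in>{0..N}. length (c v) - 1) = (\<Sum>v\<in>{0..N}. length (c v)) - (\<Sum>v\<in>{0..N}. 1)"
    by (intro sum_subtractf_nat) auto
  then have "(\<Sum>v\<in>{0..N}. length (c v) - 1) = 0"
    by (simp only: sum_length diff_self_eq_0)
  then show "halted N c"
    using len by (auto simp: halted_def intro: le_antisym)
qed

lemma targets_nonempty:
  fixes N v :: nat
  assumes "N \<ge> 1"
  shows "{0..N} - {v} \<noteq> {}"
proof -
  have "(if v = 0 then 1 else 0) \<in> {0..N} - {v}" using assms by auto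
  then show ?thesis by blast
qed

lemma set_pmf_targets:
  fixes N v :: nat
  assumes "N \<ge> 1"
  shows "set_pmf (pmf_of_set ({0..N} - {v})) = {0..N} - {v}"
  using targets_nonempty[OF assms] by simp

lemma valid_config_dsf_step:
  assumes V: "valid_config N c" and N: "N \<ge> 1" and y: "y \<in> set_pmf (dsf_step N c)"
  shows "valid_config N y"
proof -
  from y obtain p w where "p \<le> N" "w \<in> set_pmf (pmf_of_set ({0..N} - {owner N c p}))"
    "y = (if p = last (c (owner N c p)) then c else move c (owner N c p) p w)"
    unfolding dsf_step_eq by auto
  moreover note set_pmf_targets[OF N]
  ultimately have "p \<le> N" "w \<le> N" "w \<noteq> owner N c p"
    "y = (if p = last (c (owner N c p)) then c else move c (owner N c p) p w)"
    by auto
  then show ?thesis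
    using V valid_config_owner[OF V] by (auto intro: valid_config_move)
qed

(* One ring fills one of the m empty vertices iff one of the m movable particles is chosen
   (probability m/(N+1)) and it jumps to an empty vertex (probability m/N). *)
definition fill_prob :: "nat \<Rightarrow> nat \<Rightarrow> real" where
  "fill_prob N m = real m^2 / (real N * (real N + 1))"

lemma sum_targets_card_empty_vertices:
  assumes V: "valid_config N c" and p: "p \<le> N" and movable: "p \<noteq> last (c (owner N c p))"
  defines "m \<equiv> card (empty_vertices N c)"
  shows "(\<Sum>w\<in>{0..N} - {owner N c p}. \<phi> (card (empty_vertices N (move c (owner N c p) p w))))
      = real m * \<phi> (m - 1) + (real N - real m) * \<phi> m"
  (is "?S = _")
proof -
  define W where "W = {0..N} - {owner N c p}"
  define E where "E = empty_vertices N c"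
  have owner: "owner N c p \<le> N" "p \<in> set (c (owner N c p))" using valid_config_owner[OF V p] by auto
  have "E \<subseteq> W" using owner by (auto simp: E_def W_def empty_vertices_def)
  have "card (empty_vertices N (move c (owner N c p) p w)) = (if w \<in> E then m - 1 else m)" if "w \<in> W" for w
    using empty_vertices_move[OF V owner(2) _ _ movable] that m_def
    by (auto simp: W_def E_def empty_vertices_def card_Diff_singleton_if)
  then have "?S = (\<Sum>w\<in>W. if w \<in> E then \<phi> (m - 1) else \<phi> m)"
    unfolding W_def[symmetric] by (intro sum.cong) auto
  also have "\<dots> = real (card E) * \<phi> (m - 1) + real (card (W - E)) * \<phi> m"
    using \<open>E \<subseteq> W\<close> by (simp add: sum.If_cases W_def Int_absorb1 Diff_eq)
  also have "card (W - E) = N - m"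
  proof -
    have "finite E" using \<open>E \<subseteq> W\<close> finite_subset by (auto simp: W_def)
    then have "card (W - E) = card W - card E" using \<open>E \<subseteq> W\<close> by (rule card_Diff_subset)
    then show ?thesis using owner by (simp add: W_def E_def m_def)
  qed
  finally show ?thesis
    using card_empty_vertices_le[OF V] m_def by (simp add: E_def of_nat_diff)
qed

lemma card_movable_particles:
  assumes V: "valid_config N c"
  shows "card ({0..N} \<inter> - {p. p = last (c (owner N c p))}) = card (empty_vertices N c)"
proof -
  have "card ({0..N} \<inter> - {p. p = last (c (owner N c p))})
      = card ({0..N} - {p\<in>{0..N}. p = last (c (owner N c p))})"
    by (rule arg_cong[where f=card]) blast
  also have "\<dots> = card {0..N} - card {p\<in>{0..N}. p = last (c (owner N c p))}"
    by (rule card_Diff_subset) auto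
  finally show ?thesis
    using card_bottom_particles[OF V] card_empty_vertices_le[OF V] by simp
qed

lemma expectation_dsf_step_eq_average:
  fixes f :: "config \<Rightarrow> real"
  assumes V: "valid_config N c" and N: "N \<ge> 1"
  shows "measure_pmf.expectation (dsf_step N c) f
       = (\<Sum>p\<in>{0..N}. \<Sum>w\<in>{0..N} - {owner N c p}.
            f (if p = last (c (owner N c p)) then c else move c (owner N c p) p w)) / (real N * real (N + 1))"
proof -
  define R where "R p w = (if p = last (c (owner N c p)) then c else move c (owner N c p) p w)" for p w
  have inner: "measure_pmf.expectation (pmf_of_set ({0..N} - {owner N c p}) \<bind> (\<lambda>w. return_pmf (R p w))) f
      = (\<Sum>w\<in>{0..N} - {owner N c p}. f (R p w)) / real N" if "p \<le> N" for p
    using valid_config_owner[OF V that] targets_nonempty[OF N]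
    by (subst pmf_expectation_bind_pmf_of_set) (auto simp: sum_distrib_left divide_inverse_commute)
  have "measure_pmf.expectation (dsf_step N c) f
      = (\<Sum>p\<in>{0..N}. measure_pmf.expectation (pmf_of_set ({0..N} - {owner N c p}) \<bind> (\<lambda>w. return_pmf (R p w))) f
          / real (N + 1))"
    unfolding dsf_step_eq R_def[symmetric]
    by (subst pmf_expectation_bind_pmf_of_set) (auto simp: set_pmf_targets[OF N] divide_inverse_commute)
  also have "\<dots> = (\<Sum>p\<in>{0..N}. (\<Sum>w\<in>{0..N} - {owner N c p}. f (R p w)) / (real N * real (N + 1)))"
    by (intro sum.cong refl) (simp add: inner)
  finally show ?thesis by (simp add: R_def sum_divide_distrib)
qed

lemma expectation_dsf_step:
  fixes \<phi> :: "nat \<Rightarrow> real"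
  assumes V: "valid_config N c" and N: "N \<ge> 1"
  defines "m \<equiv> card (empty_vertices N c)"
  shows "measure_pmf.expectation (dsf_step N c) (\<lambda>y. \<phi> (card (empty_vertices N y)))
       = fill_prob N m * \<phi> (m - 1) + (1 - fill_prob N m) * \<phi> m"
proof -
  have "measure_pmf.expectation (dsf_step N c) (\<lambda>y. \<phi> (card (empty_vertices N y)))
      = (\<Sum>p\<in>{0..N}. (if p = last (c (owner N c p)) then real N * \<phi> m
                       else real m * \<phi> (m - 1) + (real N - real m) * \<phi> m)) / (real N * real (N + 1))"
    unfolding expectation_dsf_step_eq_average[OF V N]
  proof (intro arg_cong2[where f="(/)"] sum.cong refl)
    fix p assume "p \<in> {0..N}"
    then have p: "p \<le> N" by simp
    show "(\<Sum>w\<in>{0..N} - {owner N c p}. \<phi> (card (empty_vertices N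
            (if p = last (c (owner N c p)) then c else move c (owner N c p) p w))))
        = (if p = last (c (owner N c p)) then real N * \<phi> m else real m * \<phi> (m - 1) + (real N - real m) * \<phi> m)"
    proof (cases "p = last (c (owner N c p))")
      case True
      then show ?thesis using valid_config_owner[OF V p] by (simp add: m_def)
    next
      case False
      then show ?thesis using sum_targets_card_empty_vertices[OF V p False] by (simp add: m_def)
    qed
  qed
  also have "\<dots> = (real (N + 1 - m) * (real N * \<phi> m) + real m * (real m * \<phi> (m - 1) + (real N - real m) * \<phi> m))
      / (real N * real (N + 1))"
    using card_bottom_particles[OF V] card_movable_particles[OF V]
    by (simp add: sum.If_cases m_def Int_def)
  also have "\<dots> = fill_prob N m * \<phi> (m - 1) + (1 - fill_prob N m) * \<phi> m"
  proof -
    have "N \<noteq> 0" "real N + real N * real N > 0" using N by (simp_all add: add_pos_pos)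
    moreover have "real (N + 1 - m) = real N + 1 - real m"
      using card_empty_vertices_le[OF V] by (simp add: m_def of_nat_diff)
    ultimately show ?thesis
      unfolding fill_prob_def by (simp add: divide_simps power2_eq_square) (simp add: algebra_simps)
  qed
  finally show ?thesis .
qed

lemma dsf_paths_nonempty: "xs \<in> set_pmf (dsf_paths N c n) \<Longrightarrow> xs \<noteq> []"
  by (induction n arbitrary: xs) auto

lemma dsf_paths_Suc_first_step:
  "dsf_paths N c (Suc n) = dsf_step N c \<bind> (\<lambda>y. map_pmf ((#) c) (dsf_paths N y n))"
proof (induction n)
  case 0
  show ?case by (simp add: bind_return_pmf map_pmf_def)
next
  case (Suc n)
  define K where "K xs = map_pmf (\<lambda>y. xs @ [y]) (dsf_step N (last xs))" for xs
  have "dsf_paths N c (Suc (Suc n)) = dsf_paths N c (Suc n) \<bind> K"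
    unfolding K_def by (rule dsf_paths.simps(2))
  also have "\<dots> = (dsf_step N c \<bind> (\<lambda>y. map_pmf ((#) c) (dsf_paths N y n))) \<bind> K"
    by (simp only: Suc)
  also have "\<dots> = dsf_step N c \<bind> (\<lambda>y. dsf_paths N y n \<bind> (\<lambda>xs. K (c # xs)))"
    by (simp add: bind_assoc_pmf bind_map_pmf)
  also have "\<dots> = dsf_step N c \<bind> (\<lambda>y. dsf_paths N y n \<bind> (\<lambda>xs. map_pmf ((#) c) (K xs)))"
    by (intro bind_pmf_cong refl) (auto dest: dsf_paths_nonempty simp: K_def pmf.map_comp o_def)
  also have "\<dots> = dsf_step N c \<bind> (\<lambda>y. map_pmf ((#) c) (dsf_paths N y (Suc n)))"
    by (simp add: map_bind_pmf K_def)
  finally show ?case .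
qed

lemma halt_by_0: "halt_by N c 0 = (if halted N c then 1 else 0)"
  by (simp add: halt_by_def)

lemma halt_by_bounds: "0 \<le> halt_by N c n" "halt_by N c n \<le> 1"
  by (simp_all add: halt_by_def)

lemma halt_by_Suc:
  "halt_by N c (Suc n) = (if halted N c then 1 else measure_pmf.expectation (dsf_step N c) (\<lambda>y. halt_by N y n))"
proof -
  define E where "E = {xs. \<exists>x\<in>set xs. halted N x}"
  have "ennreal (halt_by N c (Suc n))
      = (\<integral>\<^sup>+y. emeasure (measure_pmf (dsf_paths N y n)) ((#) c -` E) \<partial>measure_pmf (dsf_step N c))"
    unfolding halt_by_def E_def[symmetric] dsf_paths_Suc_first_step measure_pmf.emeasure_eq_measure[symmetric]
    by (simp only: emeasure_bind_pmf emeasure_map_pmf)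
  show ?thesis
  proof (cases "halted N c")
    case True
    then have "(#) c -` E = UNIV" by (auto simp: E_def)
    with \<open>ennreal (halt_by N c (Suc n)) = _\<close> True show ?thesis
      by (simp add: measure_pmf.emeasure_space_1[simplified])
  next
    case False
    then have "(#) c -` E = E" by (auto simp: E_def)
    with \<open>ennreal (halt_by N c (Suc n)) = _\<close>
    have "ennreal (halt_by N c (Suc n)) = (\<integral>\<^sup>+y. ennreal (halt_by N y n) \<partial>measure_pmf (dsf_step N c))"
      by (simp add: halt_by_def E_def measure_pmf.emeasure_eq_measure)
    also have "\<dots> = ennreal (measure_pmf.expectation (dsf_step N c) (\<lambda>y. halt_by N y n))"
      by (intro nn_integral_eq_integral measure_pmf.integrable_const_bound[where B=1])
        (auto simp: halt_by_bounds)
    finally show ?thesis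
      using False halt_by_bounds[of N c "Suc n"]
      by (simp add: integral_nonneg_AE halt_by_bounds)
  qed
qed

(* Solution of the death chain: the probability of having halted within n steps when
   starting with m empty vertices. *)
definition halt_prob :: "nat \<Rightarrow> nat \<Rightarrow> nat \<Rightarrow> real" where
  "halt_prob N m n = 1 - (\<Sum>k=1..m. hypo_coeff m k * (1 - fill_prob N k)^n)"

lemma halt_prob_Suc:
  assumes "m \<ge> 1"
  shows "halt_prob N m (Suc n) = fill_prob N m * halt_prob N (m-1) n + (1 - fill_prob N m) * halt_prob N m n"
proof -
  define Q where "Q k = 1 - fill_prob N k" for k
  have Q_diff: "Q k - Q m = (real m^2 - real k^2) / (real N * (real N + 1))" for k
    by (simp add: Q_def fill_prob_def diff_divide_distrib)
  have "(\<Sum>k=1..m. hypo_coeff m k * Q k ^ Suc n) - Q m * (\<Sum>k=1..m. hypo_coeff m k * Q k ^ n)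
      = (\<Sum>k=1..m. hypo_coeff m k * (Q k - Q m) * Q k ^ n)"
    by (simp add: sum_distrib_left sum_subtractf[symmetric] algebra_simps)
  also have "\<dots> = (\<Sum>k=1..m. hypo_coeff m k * (real m^2 - real k^2) * Q k ^ n) / (real N * (real N + 1))"
    unfolding sum_divide_distrib Q_diff by (intro sum.cong refl) simp
  also have "\<dots> = fill_prob N m * (\<Sum>k=1..m-1. hypo_coeff (m-1) k * Q k ^ n)"
    unfolding hypo_coeff_recurrence[OF assms] by (simp add: fill_prob_def)
  finally show ?thesis
    unfolding halt_prob_def Q_def[symmetric] by (simp add: Q_def algebra_simps)
qed

lemma halt_by_eq_halt_prob:
  assumes N: "N \<ge> 1" and V: "valid_config N c"
  shows "halt_by N c n = halt_prob N (card (empty_vertices N c)) n"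
  using V
proof (induction n arbitrary: c)
  case 0
  show ?case
  proof (cases "halted N c")
    case True
    then show ?thesis using halted_iff_no_empty_vertices[OF "0.prems"] by (simp add: halt_by_0 halt_prob_def)
  next
    case False
    then have "card (empty_vertices N c) \<ge> 1"
      using halted_iff_no_empty_vertices[OF "0.prems"] by (simp add: card_gt_0_iff empty_vertices_def Suc_le_eq)
    then show ?thesis
      using False sum_hypo_coeff[of "card (empty_vertices N c)"] by (simp add: halt_by_0 halt_prob_def)
  qed
next
  case (Suc n)
  define m where "m = card (empty_vertices N c)"
  show ?case
  proof (cases "halted N c")
    case True
    then show ?thesis using halted_iff_no_empty_vertices[OF Suc.prems] by (simp add: halt_by_Suc halt_prob_def)
  next
    case False
    then have "m \<ge> 1"
      using halted_iff_no_empty_vertices[OF Suc.prems] by (simp add: m_def card_gt_0_iff empty_vertices_def Suc_le_eq)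
    have "measure_pmf.expectation (dsf_step N c) (\<lambda>y. halt_by N y n)
        = measure_pmf.expectation (dsf_step N c) (\<lambda>y. halt_prob N (card (empty_vertices N y)) n)"
      using valid_config_dsf_step[OF Suc.prems N] Suc.IH by (intro integral_cong_AE) (auto intro!: AE_pmfI)
    also have "\<dots> = halt_prob N m (Suc n)"
      using expectation_dsf_step[OF Suc.prems N] halt_prob_Suc[OF \<open>m \<ge> 1\<close>] by (simp add: m_def)
    finally show ?thesis using False by (simp add: halt_by_Suc m_def)
  qed
qed

lemma poisson_mixture_power:
  fixes a r :: real
  shows "(\<lambda>n. exp (- a) * a^n / fact n * r^n) sums exp (- (a * (1 - r)))"
proof -
  have "(\<lambda>n. exp (- a) * ((a * r)^n / fact n)) sums (exp (- a) * exp (a * r))"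
    using exp_converges[of "a * r"] by (intro sums_mult) (simp add: divide_inverse mult.commute)
  moreover have "exp (- a) * exp (a * r) = exp (- (a * (1 - r)))"
    by (simp add: exp_add[symmetric] algebra_simps)
  ultimately show ?thesis by (simp add: power_mult_distrib field_simps)
qed

lemma halting_time_cdf_eq_hypo_cdf:
  assumes N: "N \<ge> 1" and V: "valid_config N c" and x: "x \<ge> 0"
  shows "halting_time_cdf N c (real N * x) = hypo_cdf (card (empty_vertices N c)) x"
proof -
  define m where "m = card (empty_vertices N c)"
  define a where "a = real (N + 1) * (real N * x)"
  define p where "p n = exp (- a) * a^n / fact n" for n
  have "real N + real N * real N > 0" using N by (simp add: add_pos_pos)
  then have "a * (1 - (1 - fill_prob N k)) = real k^2 * x" for k
    by (simp add: a_def fill_prob_def field_simps)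
  then have "(\<lambda>n. p n * (1 - fill_prob N k)^n) sums exp (- (real k^2 * x))" for k
    using poisson_mixture_power[of a "1 - fill_prob N k"] by (simp add: p_def)
  moreover have "(\<lambda>n. p n * 1^n) sums 1"
    using poisson_mixture_power[of a 1] by (simp add: p_def)
  ultimately have "(\<lambda>n. p n * 1^n - (\<Sum>k=1..m. hypo_coeff m k * (p n * (1 - fill_prob N k)^n)))
      sums (1 - (\<Sum>k=1..m. hypo_coeff m k * exp (- (real k^2 * x))))"
    by (intro sums_diff sums_sum sums_mult)
  moreover have "p n * 1^n - (\<Sum>k=1..m. hypo_coeff m k * (p n * (1 - fill_prob N k)^n)) = p n * halt_prob N m n" for n
    by (simp add: halt_prob_def right_diff_distrib sum_distrib_left mult_ac)
  ultimately have "(\<lambda>n. p n * halt_prob N m n) sums hypo_cdf m x"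
    by (simp add: hypo_cdf_def)
  moreover have "\<not> real N * x < 0" using x by (simp add: not_less)
  ultimately show ?thesis
    using halt_by_eq_halt_prob[OF N V]
    by (simp add: halting_time_cdf_def sums_iff m_def a_def p_def)
qed

lemma halting_time_cdf_scaled:
  assumes "N \<ge> 1" "valid_config N c"
  shows "halting_time_cdf N c (real N * x) = (if x < 0 then 0 else hypo_cdf (card (empty_vertices N c)) x)"
proof (cases "x < 0")
  case True
  then have "real N * x < 0" using assms(1) by (simp add: mult_pos_neg)
  then show ?thesis using True by (simp add: halting_time_cdf_def)
next
  case False
  then show ?thesis using halting_time_cdf_eq_hypo_cdf[OF assms, of x] by simp
qed

lemma tendsto_hypo_cdf_cdf_tau_law:
  assumes "filterlim m at_top sequentially"
  shows "(\<lambda>N. if x < 0 then 0 else hypo_cdf (m N) x) \<longlonglongrightarrow> cdf tau_law x"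
proof (cases "x > 0")
  case True
  then show ?thesis
    using filterlim_compose[OF hypo_cdf_tendsto[OF True] assms] by (simp add: cdf_tau_law)
next
  case False
  have "\<forall>\<^sub>F N in sequentially. m N \<ge> 1"
    using assms by (simp add: filterlim_at_top)
  then have "\<forall>\<^sub>F N in sequentially. (if x < 0 then 0 else hypo_cdf (m N) x) = 0"
    by eventually_elim (use False in \<open>auto simp: hypo_cdf_0\<close>)
  then have "(\<lambda>N. if x < 0 then 0 else hypo_cdf (m N) x) \<longlonglongrightarrow> 0"
    by (rule tendsto_eventually)
  then show ?thesis using False by (simp add: cdf_tau_law)
qed

theorem mainTheorem3:
  fixes c :: "nat \<Rightarrow> config"
  assumes valid: "\<And>N. N \<ge> 1 \<Longrightarrow> valid_config N (c N)"
    and m0_infty: "filterlim (\<lambda>N. card (empty_vertices N (c N))) at_top at_top"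
  shows "prob_space tau_law
    \<and> (\<forall>\<sigma>::real. \<sigma> \<ge> 0 \<longrightarrow>
          (\<integral>x. exp (- \<sigma> * x) \<partial>tau_law) = (\<Prod>m. inverse (1 + \<sigma> / (real (Suc m))^2)))
    \<and> (\<forall>\<sigma>::real. \<sigma> > 0 \<longrightarrow>
          (\<Prod>m. inverse (1 + \<sigma> / (real (Suc m))^2)) = pi * sqrt \<sigma> / sinh (pi * sqrt \<sigma>))
    \<and> weak_conv (\<lambda>N x. halting_time_cdf N (c N) (real N * x)) (cdf tau_law)"
proof (intro conjI allI impI)
  show "prob_space tau_law" by (rule prob_space_tau_law)
  show "(\<integral>x. exp (- \<sigma> * x) \<partial>tau_law) = (\<Prod>m. inverse (1 + \<sigma> / (real (Suc m))^2))"
    if "\<sigma> \<ge> 0" for \<sigma> :: real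
    using laplace_tau_law[OF that] by simp
  show "(\<Prod>m. inverse (1 + \<sigma> / (real (Suc m))^2)) = pi * sqrt \<sigma> / sinh (pi * sqrt \<sigma>)"
    if "\<sigma> > 0" for \<sigma> :: real
    using prodinf_inverse_eq_sinh[OF that] by simp
  show "weak_conv (\<lambda>N x. halting_time_cdf N (c N) (real N * x)) (cdf tau_law)"
    unfolding weak_conv_def
  proof (intro allI impI)
    fix x :: real
    have "\<forall>\<^sub>F N in sequentially. (if x < 0 then 0 else hypo_cdf (card (empty_vertices N (c N))) x)
        = halting_time_cdf N (c N) (real N * x)"
      using eventually_ge_at_top[of 1] by eventually_elim (simp add: halting_time_cdf_scaled valid)
    with tendsto_hypo_cdf_cdf_tau_law[OF m0_infty]
    show "(\<lambda>N. halting_time_cdf N (c N) (real N * x)) \<longlonglongrightarrow> cdf tau_law x"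
      by (rule Lim_transform_eventually)
  qed
qed

end
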